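(* Let $(\Omega,\mathcal F,\mu)$ be a measure space and $\mathscr A\subset L^\infty(\Omega,\mathcal F,\mu)$. The following are equivalent: (i) $\mathscr A$ is uniformly approximable in $L^\infty$; (ii) $\sup_{f\in\mathscr A}\mathcal N(f,\varepsilon)<\infty$ for every $\varepsilon>0$. In this case $N_{\infty,\varepsilon}(\mathscr A)=\sup_{f\in\mathscr A}\mathcal N(f,\varepsilon)$ for every $\varepsilon>0$.
   Context: All measures are assumed not identically zero. $\mathscr G_{\infty,k}$ is the set of functions $\sum_{i=1}^l a_i\mathbf 1_{A_i}$ with $l\le k$, $\{A_i\}$ a measurable partition of $\Omega$, $a_i\in\mathbb R$. For $\mathscr A\subset L^\infty$, $N_{\infty,\varepsilon}(\mathscr A)=\inf\{k\ge1:\ \forall f\in\mathscr A\ \exists h\in\mathscr G_{\infty,k},\ \|f-h\|_\infty\le\varepsilon\}$ ($\inf\emptyset=\infty$); $\mathscr A$ is uniformly approximable if $N_{\infty,\varepsilon}(\mathscr A)<\infty$ for all $\varepsilon>0$. For $M\subset\mathbb R$, $\mathcal N(M,\varepsilon)$ is the least number of closed intervals of radius $\varepsilon$ covering $M$. For a measurable $f$, $\mathcal N(f,\varepsilon)=\inf\{\mathcal N(g(\Omega),\varepsilon):\ g \text{ measurable},\ g=f\ \mu\text{-a.e.}\}$. *)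

theory Defs
  imports "HOL-Probability.Probability"
begin

text \<open>Elements of L-infinity are represented by (real-valued) representatives:
  Borel-measurable, essentially bounded functions.\<close>
definition Linf :: "'a measure \<Rightarrow> ('a \<Rightarrow> real) set" where
  "Linf M = {f. f \<in> borel_measurable M \<and> (\<exists>C. AE x in M. \<bar>f x\<bar> \<le> C)}"

definition linf_dist :: "'a measure \<Rightarrow> ('a \<Rightarrow> real) \<Rightarrow> ('a \<Rightarrow> real) \<Rightarrow> ereal" where
  "linf_dist M f h = esssup M (\<lambda>x. ereal \<bar>f x - h x\<bar>)"

definition G_inf :: "'a measure \<Rightarrow> nat \<Rightarrow> ('a \<Rightarrow> real) set" where
  "G_inf M k = {h. \<exists>l\<le>k. \<exists>(A::nat \<Rightarrow> 'a set) (a::nat \<Rightarrow> real).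
      (\<forall>i<l. A i \<in> sets M) \<and> disjoint_family_on A {..<l} \<and>
      (\<Union>i<l. A i) = space M \<and>
      h = (\<lambda>x. \<Sum>i<l. a i * indicator (A i) x)}"

text \<open>N_{\infty,\varepsilon}(A), with Inf of the empty set = \<infinity>.\<close>
definition N_inf :: "'a measure \<Rightarrow> real \<Rightarrow> ('a \<Rightarrow> real) set \<Rightarrow> enat" where
  "N_inf M \<epsilon> \<A> = Inf (enat ` {k. k \<ge> 1 \<and>
      (\<forall>f\<in>\<A>. \<exists>h\<in>G_inf M k. linf_dist M f h \<le> ereal \<epsilon>)})"

definition unif_approx :: "'a measure \<Rightarrow> ('a \<Rightarrow> real) set \<Rightarrow> bool" where
  "unif_approx M \<A> \<longleftrightarrow> (\<forall>\<epsilon>>0. N_inf M \<epsilon> \<A> < \<infinity>)"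

definition cover_num :: "real set \<Rightarrow> real \<Rightarrow> enat" where
  "cover_num S \<epsilon> = Inf (enat ` {n. \<exists>C. finite C \<and> card C = n \<and>
      S \<subseteq> (\<Union>c\<in>C. {c - \<epsilon> .. c + \<epsilon>})})"

definition cover_num_fun :: "'a measure \<Rightarrow> ('a \<Rightarrow> real) \<Rightarrow> real \<Rightarrow> enat" where
  "cover_num_fun M f \<epsilon> = Inf {cover_num (g ` space M) \<epsilon> | g.
      g \<in> borel_measurable M \<and> (AE x in M. g x = f x)}"

end

theory Submission
  imports Defs
begin

text \<open>A function \<open>h\<close> with at most \<open>k\<close> values on a measurable partition is \<open>\<epsilon>\<close>-close to \<open>f\<close>
  essentially uniformly iff some version \<open>g\<close> of \<open>f\<close> has its range covered by at most \<open>k\<close>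
  intervals of radius \<open>\<epsilon>\<close>: one direction takes the values of \<open>h\<close> as centres and the version
  that agrees with \<open>h\<close> wherever \<open>f\<close> is not \<open>\<epsilon>\<close>-close to it; the other takes as partition the
  preimages under \<open>g\<close> of the covering intervals, made disjoint. Hence for each \<open>\<epsilon>\<close> the admissible
  \<open>k\<close> in \<open>N_{\<infinity>,\<epsilon>}\<close> are exactly those bounding \<open>\<N>(f,\<epsilon>)\<close> for all \<open>f\<close>, so
  \<open>N_{\<infinity>,\<epsilon>} = max 1 (sup \<N>(f,\<epsilon>))\<close>; the \<open>max 1\<close>, coming from \<open>k \<ge> 1\<close> in the definition, disappears
  when \<open>\<A>\<close> is nonempty, because covering the range of a function on a nonempty space takes at
  least one interval.\<close>

lemma sum_indicator_disjoint_family_eq: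
  fixes l :: nat
  assumes "disjoint_family_on A {..<l}" "i < l" "x \<in> A i"
  shows "(\<Sum>j<l. (a j :: real) * indicator (A j) x) = a i"
proof -
  have "(\<Sum>j<l. a j * indicator (A j) x) = (\<Sum>j\<in>{i}. a j * indicator (A j) x)"
    by (intro sum.mono_neutral_right) (use assms in \<open>auto simp: disjoint_family_on_def indicator_def\<close>)
  then show ?thesis using assms(3) by simp
qed

lemma G_inf_borel_measurable:
  assumes "h \<in> G_inf M k"
  shows "h \<in> borel_measurable M"
proof -
  obtain l and A :: "nat \<Rightarrow> 'a set" and a where A: "\<forall>i<l. A i \<in> sets M"
    and h_eq: "h = (\<lambda>x. \<Sum>i<l. a i * indicator (A i) x)"
    using assms unfolding G_inf_def by blast
  have "(\<lambda>x. \<Sum>i<l. a i * indicator (A i) x) \<in> borel_measurable M"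
    using A by (intro borel_measurable_sum borel_measurable_times borel_measurable_const
        borel_measurable_indicator) auto
  then show ?thesis using h_eq by simp
qed

lemma G_inf_mono:
  assumes "k \<le> k'"
  shows "G_inf M k \<subseteq> G_inf M k'"
  unfolding G_inf_def using assms le_trans by blast

lemma enat_Inf_le_imp_ex:
  fixes S :: "enat set"
  assumes "Inf S \<le> enat k"
  shows "\<exists>x\<in>S. x \<le> enat k"
proof -
  have "S \<noteq> {}" using assms by (auto simp: Inf_enat_def)
  then have "Inf S \<in> S" by (auto simp: Inf_enat_def intro: LeastI)
  then show ?thesis using assms by blast
qed

lemma cover_num_le_card:
  assumes "finite C" "S \<subseteq> (\<Union>c\<in>C. {c - \<epsilon> .. c + \<epsilon>})"
  shows "cover_num S \<epsilon> \<le> enat (card C)"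
  unfolding cover_num_def using assms by (intro Inf_lower) blast

lemma cover_num_le_imp_finite_cover:
  assumes "cover_num S \<epsilon> \<le> enat k"
  obtains C where "finite C" "card C \<le> k" "S \<subseteq> (\<Union>c\<in>C. {c - \<epsilon> .. c + \<epsilon>})"
  using enat_Inf_le_imp_ex[OF assms[unfolded cover_num_def]] by auto

lemma cover_num_fun_le_if_G_inf_close:
  assumes f: "f \<in> borel_measurable M" and h: "h \<in> G_inf M k"
    and close: "linf_dist M f h \<le> ereal \<epsilon>" and "0 \<le> \<epsilon>"
  shows "cover_num_fun M f \<epsilon> \<le> enat k"
proof -
  obtain l A a where "l \<le> k" and dj: "disjoint_family_on A {..<l}"
    and un: "(\<Union>i<l. A i) = space M" and h_eq: "h = (\<lambda>x. \<Sum>i<l. a i * indicator (A i) x)"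
    using h unfolding G_inf_def by blast
  have h_val: "h x = a i" if "i < l" "x \<in> A i" for x i
    unfolding h_eq using sum_indicator_disjoint_family_eq[OF dj that] .
  define g where "g x = (if \<bar>f x - h x\<bar> \<le> \<epsilon> then f x else h x)" for x
  have g_meas: "g \<in> borel_measurable M"
    unfolding g_def using f G_inf_borel_measurable[OF h] by measurable
  have "AE x in M. ereal \<bar>f x - h x\<bar> \<le> linf_dist M f h"
    unfolding linf_dist_def by (rule esssup_AE)
  then have g_ae: "AE x in M. g x = f x"
    by eventually_elim (use close order_trans in \<open>force simp: g_def\<close>)
  have "g ` space M \<subseteq> (\<Union>c\<in>a ` {..<l}. {c - \<epsilon> .. c + \<epsilon>})"
  proof
    fix y assume "y \<in> g ` space M"
    then obtain x i where "y = g x" "i < l" "x \<in> A i" using un by blast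
    moreover have "\<bar>g x - a i\<bar> \<le> \<epsilon>"
      using h_val[OF \<open>i < l\<close> \<open>x \<in> A i\<close>] \<open>0 \<le> \<epsilon>\<close> by (auto simp: g_def)
    ultimately show "y \<in> (\<Union>c\<in>a ` {..<l}. {c - \<epsilon> .. c + \<epsilon>})"
      by (intro UN_I[of "a i"]) (auto simp: abs_le_iff)
  qed
  then have "cover_num (g ` space M) \<epsilon> \<le> enat (card (a ` {..<l}))"
    by (intro cover_num_le_card) auto
  also have "\<dots> \<le> enat k" using \<open>l \<le> k\<close> card_image_le[of "{..<l}" a] by simp
  finally have "cover_num (g ` space M) \<epsilon> \<le> enat k" .
  moreover have "cover_num_fun M f \<epsilon> \<le> cover_num (g ` space M) \<epsilon>"
    unfolding cover_num_fun_def using g_meas g_ae by (intro Inf_lower) blast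
  ultimately show ?thesis by simp
qed

lemma G_inf_close_if_finite_cover:
  assumes g: "g \<in> borel_measurable M" and "finite C"
    and cover: "g ` space M \<subseteq> (\<Union>c\<in>C. {c - \<epsilon> .. c + \<epsilon>})"
  obtains h where "h \<in> G_inf M (card C)" "\<And>x. x \<in> space M \<Longrightarrow> \<bar>g x - h x\<bar> \<le> \<epsilon>"
proof -
  obtain n and a :: "nat \<Rightarrow> real" where C_eq: "C = a ` {..<n}" and n: "n = card C"
    using finite_imp_nat_seg_image_inj_on[OF \<open>finite C\<close>]
    by (metis card_image card_lessThan lessThan_def)
  define I where "I i = g -` {a i - \<epsilon> .. a i + \<epsilon>} \<inter> space M" for i
  define A where "A = disjointed I"
  have "range I \<subseteq> sets M"
    using g by (auto simp: I_def)
  then have A_sets: "\<forall>i<n. A i \<in> sets M"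
    using sets.range_disjointed_sets[of I M] by (auto simp: A_def)
  have dj: "disjoint_family_on A {..<n}"
    unfolding A_def by (rule disjoint_family_on_mono[OF subset_UNIV disjoint_family_disjointed])
  have "(\<Union>i<n. I i) = space M"
    using cover by (force simp: C_eq I_def)
  then have un: "(\<Union>i<n. A i) = space M"
    using finite_UN_disjointed_eq[of I n] by (simp add: A_def atLeast0LessThan)
  define h where "h x = (\<Sum>i<n. a i * indicator (A i) x)" for x
  show thesis
  proof
    show "h \<in> G_inf M (card C)"
      unfolding G_inf_def n[symmetric] using A_sets dj un by (auto simp: h_def[abs_def])
  next
    fix x assume "x \<in> space M"
    then obtain i where "i < n" "x \<in> A i" using un by blast
    then have "h x = a i" "g x \<in> {a i - \<epsilon> .. a i + \<epsilon>}"
      unfolding h_def using sum_indicator_disjoint_family_eq[OF dj] disjointed_subset[of I i]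
      by (auto simp: A_def I_def)
    then show "\<bar>g x - h x\<bar> \<le> \<epsilon>" by (auto simp: abs_le_iff)
  qed
qed

lemma G_inf_close_if_cover_num_fun_le:
  assumes f: "f \<in> borel_measurable M" and "cover_num_fun M f \<epsilon> \<le> enat k"
  shows "\<exists>h\<in>G_inf M k. linf_dist M f h \<le> ereal \<epsilon>"
proof -
  obtain g where g: "g \<in> borel_measurable M" and g_ae: "AE x in M. g x = f x"
    and g_cover_num: "cover_num (g ` space M) \<epsilon> \<le> enat k"
    using enat_Inf_le_imp_ex[OF assms(2)[unfolded cover_num_fun_def]] by blast
  obtain C where "finite C" "card C \<le> k"
    and cover: "g ` space M \<subseteq> (\<Union>c\<in>C. {c - \<epsilon> .. c + \<epsilon>})"
    using cover_num_le_imp_finite_cover[OF g_cover_num] by blast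
  then obtain h where h: "h \<in> G_inf M (card C)"
    and close: "\<And>x. x \<in> space M \<Longrightarrow> \<bar>g x - h x\<bar> \<le> \<epsilon>"
    using G_inf_close_if_finite_cover[OF g] by blast
  have "h \<in> G_inf M k" using h G_inf_mono[OF \<open>card C \<le> k\<close>] by blast
  moreover have "AE x in M. ereal \<bar>f x - h x\<bar> \<le> ereal \<epsilon>"
    using g_ae AE_space by eventually_elim (use close in force)
  then have "linf_dist M f h \<le> ereal \<epsilon>"
    unfolding linf_dist_def by (intro esssup_I) (use f G_inf_borel_measurable[OF h] in measurable)
  ultimately show ?thesis by blast
qed

lemma G_inf_close_iff_cover_num_fun_le:
  assumes "f \<in> borel_measurable M" "0 \<le> \<epsilon>"
  shows "(\<exists>h\<in>G_inf M k. linf_dist M f h \<le> ereal \<epsilon>) \<longleftrightarrow> cover_num_fun M f \<epsilon> \<le> enat k"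
  using cover_num_fun_le_if_G_inf_close[OF assms(1) _ _ assms(2)]
    G_inf_close_if_cover_num_fun_le[OF assms(1)] by blast

lemma Inf_enat_atLeast: "Inf (enat ` {k. m \<le> k}) = enat m"
  by (rule antisym) (auto intro: Inf_lower Inf_greatest)

lemma N_inf_eq_max_SUP_cover_num_fun:
  assumes "\<A> \<subseteq> Linf M" "0 \<le> \<epsilon>"
  shows "N_inf M \<epsilon> \<A> = max 1 (SUP f\<in>\<A>. cover_num_fun M f \<epsilon>)"
proof -
  define S where "S = (SUP f\<in>\<A>. cover_num_fun M f \<epsilon>)"
  have meas: "f \<in> borel_measurable M" if "f \<in> \<A>" for f
    using assms(1) that unfolding Linf_def by auto
  have "(\<forall>f\<in>\<A>. \<exists>h\<in>G_inf M k. linf_dist M f h \<le> ereal \<epsilon>) \<longleftrightarrow> S \<le> enat k" for k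
    unfolding S_def SUP_le_iff using G_inf_close_iff_cover_num_fun_le[OF meas assms(2)] by blast
  then have N_eq: "N_inf M \<epsilon> \<A> = Inf (enat ` {k. 1 \<le> k \<and> S \<le> enat k})"
    unfolding N_inf_def by simp
  show ?thesis
  proof (cases S)
    case (enat s)
    then have "{k. 1 \<le> k \<and> S \<le> enat k} = {k. max 1 s \<le> k}" by auto
    then show ?thesis
      using enat by (simp add: N_eq Inf_enat_atLeast S_def[symmetric] one_enat_def max_def)
  next
    case infinity
    then show ?thesis by (simp add: N_eq S_def[symmetric] Inf_enat_def)
  qed
qed

lemma one_le_cover_num:
  assumes "S \<noteq> {}"
  shows "1 \<le> cover_num S \<epsilon>"
  unfolding cover_num_def
proof (rule Inf_greatest, clarify)
  fix C assume "finite C" "S \<subseteq> (\<Union>c\<in>C. {c - \<epsilon>..c + \<epsilon>})"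
  then have "card C \<noteq> 0" using assms by auto
  then show "1 \<le> enat (card C)" by (simp add: one_enat_def)
qed

lemma one_le_cover_num_fun:
  assumes "space M \<noteq> {}"
  shows "1 \<le> cover_num_fun M f \<epsilon>"
  unfolding cover_num_fun_def using assms by (auto intro!: Inf_greatest one_le_cover_num)

theorem theorem4p10:
  fixes M :: "'a measure" and \<A> :: "('a \<Rightarrow> real) set"
  assumes "emeasure M (space M) \<noteq> 0"
    and "\<A> \<subseteq> Linf M"
  shows "(unif_approx M \<A> \<longleftrightarrow> (\<forall>\<epsilon>>0. (SUP f\<in>\<A>. cover_num_fun M f \<epsilon>) < \<infinity>))
       \<and> (\<A> \<noteq> {} \<longrightarrow> unif_approx M \<A> \<longrightarrow>
            (\<forall>\<epsilon>>0. N_inf M \<epsilon> \<A> = (SUP f\<in>\<A>. cover_num_fun M f \<epsilon>)))"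
proof -
  have N_eq: "N_inf M \<epsilon> \<A> = max 1 (SUP f\<in>\<A>. cover_num_fun M f \<epsilon>)" if "\<epsilon> > 0" for \<epsilon>
    using N_inf_eq_max_SUP_cover_num_fun[OF assms(2)] that by simp
  have "max 1 X < \<infinity> \<longleftrightarrow> X < \<infinity>" for X :: enat
    by (cases X) (auto simp: max_def one_enat_def)
  then have "unif_approx M \<A> \<longleftrightarrow> (\<forall>\<epsilon>>0. (SUP f\<in>\<A>. cover_num_fun M f \<epsilon>) < \<infinity>)"
    unfolding unif_approx_def using N_eq by auto
  moreover have "N_inf M \<epsilon> \<A> = (SUP f\<in>\<A>. cover_num_fun M f \<epsilon>)" if "f \<in> \<A>" "\<epsilon> > 0" for f \<epsilon>
  proof -
    have "space M \<noteq> {}" using assms(1) by auto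
    then have "1 \<le> (SUP f\<in>\<A>. cover_num_fun M f \<epsilon>)"
      using one_le_cover_num_fun SUP_upper[OF \<open>f \<in> \<A>\<close>] order_trans by metis
    then show ?thesis using N_eq[OF \<open>\<epsilon> > 0\<close>] by (simp add: max_def)
  qed
  ultimately show ?thesis by blast
qed

end
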